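(* Let $B$ be a set of memory blocks and $G=(V,E)$ a finite directed multigraph whose edges are labeled with elements of $B$. For any nodes $v_1, v_2 \in V$ and any path $\pi$ in $G$ from $v_1$ to $v_2$, there is a path $\pi'$ from $v_1$ to $v_2$, obtained from $\pi$ by removing sub-paths, such that the set of labels of the edges of $\pi'$ equals the set of labels of the edges of $\pi$, and $\pi'$ has at most $|V|\cdot|B|$ edges (hence, taking $B$ to be the set of labels actually used, at most $|V|\cdot|E|$ edges). *)

theory Defs
  imports Main "HOL-Library.Sublist"
begin

text \<open>A finite directed multigraph G = (V,E) with edge labels: edges are abstract
  objects of type 'e (so parallel edges are allowed), with source, target and label maps.\<close>

definition labeled_multigraph ::
  "'v set \<Rightarrow> 'e set \<Rightarrow> ('e \<Rightarrow> 'v) \<Rightarrow> ('e \<Rightarrow> 'v) \<Rightarrow> ('e \<Rightarrow> 'b) \<Rightarrow> 'b set \<Rightarrow> bool" where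
  "labeled_multigraph V E src tgt lab B \<longleftrightarrow>
     finite V \<and> finite E \<and> (\<forall>e\<in>E. src e \<in> V \<and> tgt e \<in> V \<and> lab e \<in> B)"

definition is_path ::
  "'e set \<Rightarrow> ('e \<Rightarrow> 'v) \<Rightarrow> ('e \<Rightarrow> 'v) \<Rightarrow> 'v \<Rightarrow> 'e list \<Rightarrow> 'v \<Rightarrow> bool" where
  "is_path E src tgt u es w \<longleftrightarrow>
     set es \<subseteq> E \<and>
     (es = [] \<longrightarrow> u = w) \<and>
     (es \<noteq> [] \<longrightarrow> src (hd es) = u \<and> tgt (last es) = w \<and>
        (\<forall>i. Suc i < length es \<longrightarrow> tgt (es ! i) = src (es ! Suc i)))"

end

theory Submission
  imports Defs
begin

text \<open>Split the path at the last edge \<open>e\<close> whose label is new, \<open>\<pi> = \<alpha> @ e # \<beta>\<close>. All labels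
  of \<open>\<beta>\<close> already occur in \<open>\<alpha> @ [e]\<close>, so \<open>\<beta>\<close> may be replaced by a sub-walk visiting
  every vertex at most once, which has fewer than \<open>|V|\<close> edges; \<open>\<alpha>\<close> carries one label
  less and is shortened recursively. Hence every label costs at most \<open>|V|\<close> edges.\<close>

fun walk :: "'e set \<Rightarrow> ('e \<Rightarrow> 'v) \<Rightarrow> ('e \<Rightarrow> 'v) \<Rightarrow> 'v \<Rightarrow> 'e list \<Rightarrow> 'v \<Rightarrow> bool" where
  "walk E src tgt u [] w \<longleftrightarrow> u = w"
| "walk E src tgt u (e # es) w \<longleftrightarrow> e \<in> E \<and> src e = u \<and> walk E src tgt (tgt e) es w"

lemma is_path_Cons_Cons:
  "is_path E src tgt u (e # f # fs) w \<longleftrightarrow>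
     e \<in> E \<and> src e = u \<and> tgt e = src f \<and> is_path E src tgt (tgt e) (f # fs) w"
  unfolding is_path_def by (auto simp: nth_Cons split: nat.splits)

lemma is_path_iff_walk: "is_path E src tgt u es w \<longleftrightarrow> walk E src tgt u es w"
proof (induction es arbitrary: u rule: induct_list012)
  case (3 e f fs)
  then show ?case by (auto simp: is_path_Cons_Cons)
qed (auto simp: is_path_def)

lemma set_mono_subseq: "subseq xs ys \<Longrightarrow> set xs \<subseteq> set ys"
  by (auto dest: list_emb_set)

lemma walk_append:
  "walk E src tgt u (xs @ ys) w \<longleftrightarrow> (\<exists>m. walk E src tgt u xs m \<and> walk E src tgt m ys w)"
  by (induction xs arbitrary: u) auto

lemma walk_edges_subset: "walk E src tgt u es w \<Longrightarrow> set es \<subseteq> E"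
  by (induction es arbitrary: u) auto

lemma walk_shortcut_distinct_vertices:
  assumes "walk E src tgt u \<beta> w"
  shows "\<exists>\<beta>'. walk E src tgt u \<beta>' w \<and> subseq \<beta>' \<beta> \<and> distinct (map src \<beta>' @ [w])"
  using assms
proof (induction \<beta> arbitrary: u)
  case Nil
  then show ?case by (intro exI[of _ "[]"]) auto
next
  case (Cons e \<gamma>)
  then have e: "e \<in> E" "src e = u" and \<gamma>: "walk E src tgt (tgt e) \<gamma> w" by auto
  from Cons.IH[OF \<gamma>] obtain \<gamma>' where \<gamma>': "walk E src tgt (tgt e) \<gamma>' w" "subseq \<gamma>' \<gamma>"
    and dist: "distinct (map src \<gamma>' @ [w])" by blast
  consider (fresh) "u \<notin> set (map src \<gamma>' @ [w])" | (last) "u = w"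
    | (revisited) "u \<in> src ` set \<gamma>'"
    by auto
  then show ?case
  proof cases
    case fresh
    have "walk E src tgt u (e # \<gamma>') w" using e \<gamma>'(1) by simp
    moreover have "subseq (e # \<gamma>') (e # \<gamma>)" using \<gamma>'(2) by simp
    moreover have "distinct (map src (e # \<gamma>') @ [w])" using fresh e(2) dist by simp
    ultimately show ?thesis by blast
  next
    case last
    then show ?thesis by (intro exI[of _ "[]"]) simp
  next
    case revisited
    then obtain \<delta> e' \<epsilon> where split: "\<gamma>' = \<delta> @ e' # \<epsilon>" and "src e' = u"
      by (metis image_iff split_list)
    then have "walk E src tgt u (e' # \<epsilon>) w" using \<gamma>'(1) by (auto simp: walk_append)
    moreover have "subseq (e' # \<epsilon>) (e # \<gamma>)"
    proof -
      have "subseq (e' # \<epsilon>) \<gamma>'" using split by (simp add: list_emb_append2)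
      then show ?thesis using \<gamma>'(2) by (meson list_emb_Cons subseq_order.order_trans)
    qed
    moreover have "distinct (map src (e' # \<epsilon>) @ [w])" using dist split by simp
    ultimately show ?thesis by blast
  qed
qed

lemma walk_shortcut_length_less_card:
  assumes "walk E src tgt u \<beta> w" and "finite V" and "\<forall>e\<in>E. src e \<in> V" and "w \<in> V"
  shows "\<exists>\<beta>'. walk E src tgt u \<beta>' w \<and> subseq \<beta>' \<beta> \<and> length \<beta>' < card V"
proof -
  obtain \<beta>' where \<beta>': "walk E src tgt u \<beta>' w" "subseq \<beta>' \<beta>"
    and dist: "distinct (map src \<beta>' @ [w])"
    using walk_shortcut_distinct_vertices[OF assms(1)] by blast
  have "set (map src \<beta>' @ [w]) \<subseteq> V" using walk_edges_subset[OF \<beta>'(1)] assms(3,4) by auto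
  then have "length (map src \<beta>' @ [w]) \<le> card V"
    using card_mono[OF assms(2)] distinct_card[OF dist] by metis
  then show ?thesis using \<beta>' by auto
qed

lemma split_at_last_new_label:
  assumes "\<pi> \<noteq> []"
  shows "\<exists>\<alpha> e \<beta>. \<pi> = \<alpha> @ e # \<beta> \<and> f e \<notin> f ` set \<alpha> \<and> f ` set \<beta> \<subseteq> f ` set (\<alpha> @ [e])"
  using assms
proof (induction \<pi> rule: rev_induct)
  case (snoc x xs)
  show ?case
  proof (cases "f x \<in> f ` set xs")
    case True
    then have "xs \<noteq> []" by auto
    then obtain \<alpha> e \<beta> where "xs = \<alpha> @ e # \<beta>" "f e \<notin> f ` set \<alpha>"
      "f ` set \<beta> \<subseteq> f ` set (\<alpha> @ [e])"
      using snoc.IH by blast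
    then show ?thesis using True by (intro exI[of _ \<alpha>] exI[of _ e] exI[of _ "\<beta> @ [x]"]) auto
  next
    case False
    then show ?thesis by (intro exI[of _ xs] exI[of _ x] exI[of _ "[]"]) simp
  qed
qed simp

lemma walk_label_preserving_shortcut:
  assumes "finite V" and "\<forall>e\<in>E. src e \<in> V"
    and "walk E src tgt u \<pi> w" and "w \<in> V"
  shows "\<exists>\<pi>'. walk E src tgt u \<pi>' w \<and> subseq \<pi>' \<pi> \<and> lab ` set \<pi>' = lab ` set \<pi> \<and>
               length \<pi>' \<le> card V * card (lab ` set \<pi>)"
  using assms(3,4)
proof (induction \<pi> arbitrary: w rule: measure_induct_rule[where f = length])
  case (less \<pi>)
  show ?case
  proof (cases "\<pi> = []")
    case False
    then obtain \<alpha> e \<beta> where \<pi>: "\<pi> = \<alpha> @ e # \<beta>" and new: "lab e \<notin> lab ` set \<alpha>"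
      and old: "lab ` set \<beta> \<subseteq> lab ` set (\<alpha> @ [e])"
      using split_at_last_new_label[OF False, of lab] by blast
    from less.prems(1) \<pi> obtain m where \<alpha>: "walk E src tgt u \<alpha> m"
      and e: "e \<in> E" "src e = m" and \<beta>: "walk E src tgt (tgt e) \<beta> w"
      by (auto simp: walk_append)
    obtain \<alpha>' where \<alpha>': "walk E src tgt u \<alpha>' m" "subseq \<alpha>' \<alpha>" "lab ` set \<alpha>' = lab ` set \<alpha>"
      and len_\<alpha>': "length \<alpha>' \<le> card V * card (lab ` set \<alpha>)"
      using less.IH[of \<alpha> m] \<pi> \<alpha> e assms(2) by auto
    obtain \<beta>' where \<beta>': "walk E src tgt (tgt e) \<beta>' w" "subseq \<beta>' \<beta>"
      and len_\<beta>': "length \<beta>' < card V"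
      using walk_shortcut_length_less_card[OF \<beta> assms(1,2) less.prems(2)] by blast
    have "lab ` set \<beta>' \<subseteq> lab ` set \<beta>" using \<beta>'(2) by (metis image_mono set_mono_subseq)
    moreover have labels_\<pi>: "lab ` set \<pi> = insert (lab e) (lab ` set \<alpha>)" using \<pi> old by auto
    ultimately have labels: "lab ` set (\<alpha>' @ e # \<beta>') = lab ` set \<pi>" using \<pi> \<alpha>'(3) by auto
    have "card (lab ` set \<pi>) = Suc (card (lab ` set \<alpha>))" using labels_\<pi> new by simp
    then have "length (\<alpha>' @ e # \<beta>') \<le> card V * card (lab ` set \<pi>)" using len_\<alpha>' len_\<beta>' by simp
    moreover have "walk E src tgt u (\<alpha>' @ e # \<beta>') w" using \<alpha>'(1) e \<beta>'(1) by (auto simp: walk_append)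
    moreover have "subseq (\<alpha>' @ e # \<beta>') \<pi>" using \<pi> \<alpha>'(2) \<beta>'(2) by (simp add: list_emb_append_mono)
    ultimately show ?thesis using labels by blast
  qed (use less.prems in auto)
qed

theorem mainTheorem7:
  fixes V :: "'v set" and E :: "'e set" and src tgt :: "'e \<Rightarrow> 'v"
    and lab :: "'e \<Rightarrow> 'b" and B :: "'b set"
  assumes G: "labeled_multigraph V E src tgt lab B"
    and finB: "finite B"
    and v1: "v1 \<in> V" and v2: "v2 \<in> V"
    and pi: "is_path E src tgt v1 \<pi> v2"
  shows "\<exists>\<pi>'. is_path E src tgt v1 \<pi>' v2 \<and> subseq \<pi>' \<pi> \<and>
              lab ` set \<pi>' = lab ` set \<pi> \<and>
              length \<pi>' \<le> card V * card B \<and>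
              length \<pi>' \<le> card V * card E"
proof -
  have finite: "finite V" "finite E" and edges: "\<forall>e\<in>E. src e \<in> V \<and> lab e \<in> B"
    using G unfolding labeled_multigraph_def by auto
  have walk: "walk E src tgt v1 \<pi> v2" using pi by (simp add: is_path_iff_walk)
  then have \<pi>_E: "set \<pi> \<subseteq> E" by (rule walk_edges_subset)
  have "\<forall>e\<in>E. src e \<in> V" using edges by blast
  then obtain \<pi>' where \<pi>': "walk E src tgt v1 \<pi>' v2" "subseq \<pi>' \<pi>" "lab ` set \<pi>' = lab ` set \<pi>"
    and len: "length \<pi>' \<le> card V * card (lab ` set \<pi>)"
    using walk_label_preserving_shortcut[OF finite(1) _ walk v2, where lab = lab] by blast
  have "card (lab ` set \<pi>) \<le> card B" using \<pi>_E edges finB by (intro card_mono) auto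
  then have "length \<pi>' \<le> card V * card B" using len by (meson le_trans mult_le_mono2)
  moreover have "card (lab ` set \<pi>) \<le> card E"
    using card_image_le[of "set \<pi>" lab] card_mono[OF finite(2) \<pi>_E] by simp
  then have "length \<pi>' \<le> card V * card E" using len by (meson le_trans mult_le_mono2)
  ultimately show ?thesis using \<pi>' by (intro exI[of _ \<pi>']) (simp add: is_path_iff_walk)
qed

end
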